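(* Let $n$ be an even integer, let $s$ be a positive integer with $s < n/2$, put $k = s$, and let $x$ be an integer with $2s \leq x \leq n-s-1$. Let $d$ be the sequence of length $n$ $$d = (\underbrace{n-1, \ldots, n-1}_{s},\, \underbrace{x, \ldots, x}_{n-2s},\, \underbrace{s, \ldots, s}_{s}).$$ Then $d$ is a $k$-factorable graphic sequence, and no realization of $d$ has a connected $k$-factor.
   Context: A finite sequence of nonnegative integers $d = (d_1, \ldots, d_n)$ is graphic if there is a simple graph on vertices $v_1, \ldots, v_n$ with $\deg(v_i) = d_i$ for all $i$; such a graph is a realization of $d$. A $k$-factor of a graph $G$ is a spanning subgraph of $G$ in which every vertex has degree $k$. A graphic sequence $d$ is $k$-factorable if some realization of $d$ contains a $k$-factor. A connected $k$-factor is a $k$-factor that is a connected graph. *)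

theory Defs
  imports Main
begin

text \<open>A simple graph on the vertex set {0..<n} (vertex i stands for v_(i+1))
  is represented by its edge set: a set of 2-element subsets of {0..<n}.\<close>

definition simple_graph :: "nat \<Rightarrow> nat set set \<Rightarrow> bool" where
  "simple_graph n G \<longleftrightarrow> (\<forall>e\<in>G. e \<subseteq> {0..<n} \<and> card e = 2)"

definition degree :: "nat set set \<Rightarrow> nat \<Rightarrow> nat" where
  "degree G v = card {e\<in>G. v \<in> e}"

definition realization :: "nat list \<Rightarrow> nat set set \<Rightarrow> bool" where
  "realization d G \<longleftrightarrow> simple_graph (length d) G \<and>
     (\<forall>i<length d. degree G i = d ! i)"

definition graphic :: "nat list \<Rightarrow> bool" where
  "graphic d \<longleftrightarrow> (\<exists>G. realization d G)"

definition k_factor :: "nat \<Rightarrow> nat \<Rightarrow> nat set set \<Rightarrow> nat set set \<Rightarrow> bool" where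
  "k_factor n k G H \<longleftrightarrow> H \<subseteq> G \<and> (\<forall>v<n. degree H v = k)"

definition k_factorable :: "nat list \<Rightarrow> nat \<Rightarrow> bool" where
  "k_factorable d k \<longleftrightarrow> graphic d \<and>
     (\<exists>G H. realization d G \<and> k_factor (length d) k G H)"

definition adj :: "nat set set \<Rightarrow> nat \<Rightarrow> nat \<Rightarrow> bool" where
  "adj H u v \<longleftrightarrow> {u, v} \<in> H \<and> u \<noteq> v"

definition connected_graph :: "nat \<Rightarrow> nat set set \<Rightarrow> bool" where
  "connected_graph n H \<longleftrightarrow> (\<forall>u<n. \<forall>v<n. (adj H)\<^sup>*\<^sup>* u v)"

definition connected_k_factor :: "nat \<Rightarrow> nat \<Rightarrow> nat set set \<Rightarrow> nat set set \<Rightarrow> bool" where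
  "connected_k_factor n k G H \<longleftrightarrow> k_factor n k G H \<and> connected_graph n H"

end

theory Submission
  imports Defs "HOL-Number_Theory.Cong"
begin

text \<open>
  Write A for the first s vertices, C for the last s vertices and B for the n - 2s vertices in
  between. A realization with an s-factor: join A to everything, put an (x - s)-regular graph
  on B, and take as s-factor the complete bipartite graph between A and C together with an
  s-regular subgraph of the regular graph on B. Both regular graphs come from the round-robin
  1-factorization of the complete graph on the even number n - 2s of vertices of B.
  In any realization the vertices of A have degree n - 1, so every vertex of C is adjacent to
  all of A and, having degree s, to nothing else. In an s-factor each vertex of C therefore
  keeps exactly its neighbours in A, which uses up the s factor edges at each vertex of A.
  Hence A and C form a union of components of the factor that misses B.
\<close>

lemma adj_commute: "adj G u v = adj G v u"
  unfolding adj_def by (auto simp: insert_commute)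

lemma adj_less: "simple_graph n G \<Longrightarrow> adj G u v \<Longrightarrow> u < n \<and> v < n"
  unfolding simple_graph_def adj_def by auto

lemma simple_graph_subset: "simple_graph n G \<Longrightarrow> H \<subseteq> G \<Longrightarrow> simple_graph n H"
  unfolding simple_graph_def by blast

lemma degree_eq_card_adj:
  assumes "simple_graph n G"
  shows "degree G u = card {v. adj G u v}"
proof -
  have "{e \<in> G. u \<in> e} = (\<lambda>v. {u, v}) ` {v. adj G u v}"
  proof (intro equalityI subsetI)
    fix e assume e: "e \<in> {e \<in> G. u \<in> e}"
    then obtain a b where "e = {a, b}" "a \<noteq> b"
      using assms unfolding simple_graph_def by (metis (no_types, lifting) card_2_iff mem_Collect_eq)
    with e show "e \<in> (\<lambda>v. {u, v}) ` {v. adj G u v}"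
      unfolding adj_def by (auto simp: insert_commute)
  qed (auto simp: adj_def)
  moreover have "inj_on (\<lambda>v. {u, v}) {v. adj G u v}"
    by (rule inj_onI) (auto simp: doubleton_eq_iff adj_def)
  ultimately show ?thesis
    unfolding degree_def by (simp add: card_image)
qed

lemma finite_adj: "simple_graph n G \<Longrightarrow> finite {v. adj G u v}"
  by (rule finite_subset[of _ "{0..<n}"]) (use adj_less in auto)

lemma adj_of_full_degree:
  assumes G: "simple_graph n G" and "u < n" "degree G u = n - 1" "v < n" "v \<noteq> u"
  shows "adj G u v"
proof -
  have sub: "{w. adj G u w} \<subseteq> {0..<n} - {u}"
  proof
    fix w assume "w \<in> {w. adj G u w}"
    then show "w \<in> {0..<n} - {u}" using adj_less[OF G] by (auto simp: adj_def)
  qed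
  have "card {w. adj G u w} = card ({0..<n} - {u})"
    using assms(2,3) by (simp add: degree_eq_card_adj[OF G])
  then have "{w. adj G u w} = {0..<n} - {u}"
    using card_subset_eq[OF _ sub] by simp
  then have "v \<in> {w. adj G u w}" using assms(4,5) by simp
  then show ?thesis by simp
qed

lemma not_connected_if_adj_closed:
  assumes closed: "\<And>u v. adj H u v \<Longrightarrow> u \<in> S \<Longrightarrow> v \<in> S"
    and "u \<in> S" "u < n" "v < n" "v \<notin> S"
  shows "\<not> connected_graph n H"
proof
  assume "connected_graph n H"
  then have "(adj H)\<^sup>*\<^sup>* u v" using assms unfolding connected_graph_def by blast
  then have "v \<in> S" using \<open>u \<in> S\<close> by induction (auto intro: closed)
  with \<open>v \<notin> S\<close> show False ..
qed

lemma not_connected_k_factor: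
  assumes G: "simple_graph n G" and H: "k_factor n k G H"
    and A: "A \<subseteq> {0..<n}" "card A = k" "\<And>a. a \<in> A \<Longrightarrow> degree G a = n - 1"
    and C: "C \<subseteq> {0..<n}" "card C = k" "\<And>c. c \<in> C \<Longrightarrow> degree G c = k"
    and "A \<inter> C = {}" "0 < k" "v < n" "v \<notin> A \<union> C"
  shows "\<not> connected_graph n H"
proof -
  have "H \<subseteq> G" and degree_H: "\<And>u. u < n \<Longrightarrow> degree H u = k"
    using H unfolding k_factor_def by auto
  then have H_simple: "simple_graph n H" using simple_graph_subset[OF G] by blast
  have finite_A: "finite A" using A(1) finite_subset by blast
  have adj_C: "{u. adj H c u} = A" if "c \<in> C" for c
  proof -
    have "A \<subseteq> {u. adj G c u}"
    proof
      fix a assume "a \<in> A"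
      then have "adj G a c"
        using A C \<open>A \<inter> C = {}\<close> that by (intro adj_of_full_degree[OF G]) auto
      then show "a \<in> {u. adj G c u}" by (simp add: adj_commute)
    qed
    moreover have "card {u. adj G c u} = card A"
      using A C that degree_eq_card_adj[OF G] by simp
    ultimately have "{u. adj G c u} = A"
      using finite_adj[OF G] by (metis card_subset_eq)
    moreover have "{u. adj H c u} \<subseteq> {u. adj G c u}"
      using \<open>H \<subseteq> G\<close> by (auto simp: adj_def)
    moreover have "card {u. adj H c u} = card A"
      using A C that degree_H degree_eq_card_adj[OF H_simple] by auto
    ultimately show ?thesis
      using finite_A by (simp add: card_subset_eq)
  qed
  have adj_A: "{u. adj H a u} = C" if "a \<in> A" for a
  proof -
    have "C \<subseteq> {u. adj H a u}"
      using adj_C that by (auto simp: adj_commute)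
    moreover have "card {u. adj H a u} = card C"
      using A C that degree_H degree_eq_card_adj[OF H_simple] by auto
    ultimately show ?thesis
      using finite_adj[OF H_simple] by (metis card_subset_eq)
  qed
  obtain a where "a \<in> A" using \<open>0 < k\<close> \<open>card A = k\<close> by fastforce
  show ?thesis
  proof (rule not_connected_if_adj_closed[where S = "A \<union> C" and u = a])
    show "w \<in> A \<union> C" if "adj H u w" "u \<in> A \<union> C" for u w
      using that adj_A adj_C by blast
  qed (use \<open>a \<in> A\<close> A \<open>v < n\<close> \<open>v \<notin> A \<union> C\<close> in auto)
qed

definition graph_of_rel :: "nat \<Rightarrow> (nat \<Rightarrow> nat \<Rightarrow> bool) \<Rightarrow> nat set set" where
  "graph_of_rel n P = {{i, j} | i j. i < n \<and> j < n \<and> i \<noteq> j \<and> P i j}"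

lemma simple_graph_graph_of_rel: "simple_graph n (graph_of_rel n P)"
  unfolding simple_graph_def graph_of_rel_def by auto

lemma graph_of_rel_mono: "(\<And>i j. P i j \<Longrightarrow> Q i j) \<Longrightarrow> graph_of_rel n P \<subseteq> graph_of_rel n Q"
  unfolding graph_of_rel_def by blast

lemma adj_graph_of_rel:
  assumes "\<And>i j. P i j = P j i"
  shows "adj (graph_of_rel n P) u v \<longleftrightarrow> u < n \<and> v < n \<and> u \<noteq> v \<and> P u v"
  using assms unfolding adj_def graph_of_rel_def by (auto simp: doubleton_eq_iff)

lemma degree_graph_of_rel:
  assumes "\<And>i j. P i j = P j i" "u < n"
  shows "degree (graph_of_rel n P) u = card {v. v < n \<and> v \<noteq> u \<and> P u v}"
proof -
  have "{v. adj (graph_of_rel n P) u v} = {v. v < n \<and> v \<noteq> u \<and> P u v}"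
    using assms by (auto simp: adj_graph_of_rel)
  then show ?thesis
    by (simp add: degree_eq_card_adj[OF simple_graph_graph_of_rel])
qed

text \<open>
  The standard 1-factorization of the complete graph on {0..p}, p odd: vertex p is the hub and
  the edges of colour c form a perfect matching, so each vertex sees every colour below p once.
\<close>

definition round_robin_colour :: "nat \<Rightarrow> nat \<Rightarrow> nat \<Rightarrow> nat" where
  "round_robin_colour p i j =
     (if i = p then 2 * j mod p else if j = p then 2 * i mod p else (i + j) mod p)"

lemma round_robin_colour_commute: "round_robin_colour p i j = round_robin_colour p j i"
  unfolding round_robin_colour_def by (simp add: add.commute)

lemma round_robin_colour_less: "0 < p \<Longrightarrow> round_robin_colour p i j < p"
  unfolding round_robin_colour_def by simp

lemma inj_on_round_robin_colour:
  assumes "odd p" "v \<le> p"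
  shows "inj_on (round_robin_colour p v) ({0..p} - {v})"
proof (cases "v = p")
  case True
  have "coprime 2 p" using \<open>odd p\<close> by simp
  show ?thesis
  proof (rule inj_onI)
    fix a b assume "a \<in> {0..p} - {v}" "b \<in> {0..p} - {v}"
      and "round_robin_colour p v a = round_robin_colour p v b"
    then have "a < p" "b < p" "[2 * a = 2 * b] (mod p)"
      using True by (auto simp: round_robin_colour_def cong_def)
    then show "a = b"
      using cong_mult_lcancel_nat[OF \<open>coprime 2 p\<close>] cong_less_modulus_unique_nat by blast
  qed
next
  case False
  define f where "f j = (if j = p then v else j)" for j
  have colour: "round_robin_colour p v j = (v + f j) mod p" if "j \<noteq> v" for j
    using False that by (simp add: round_robin_colour_def f_def mult_2)
  show ?thesis
  proof (rule inj_onI)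
    fix a b assume a: "a \<in> {0..p} - {v}" and b: "b \<in> {0..p} - {v}"
      and eq: "round_robin_colour p v a = round_robin_colour p v b"
    have "[v + f a = v + f b] (mod p)" using eq a b by (simp add: colour cong_def)
    then have "[f a = f b] (mod p)" by (simp add: cong_add_lcancel_nat)
    moreover have "f a < p" "f b < p" using a b assms(2) False by (auto simp: f_def)
    ultimately have "f a = f b" using cong_less_modulus_unique_nat by blast
    then show "a = b" using a b by (auto simp: f_def split: if_splits)
  qed
qed

lemma bij_betw_round_robin_colour:
  assumes "odd p" "v \<le> p"
  shows "bij_betw (round_robin_colour p v) ({0..p} - {v}) {0..<p}"
proof -
  have inj: "inj_on (round_robin_colour p v) ({0..p} - {v})"
    using inj_on_round_robin_colour[OF assms] .
  have "0 < p" using \<open>odd p\<close> by (cases p) auto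
  then have "round_robin_colour p v ` ({0..p} - {v}) \<subseteq> {0..<p}"
    using round_robin_colour_less by auto
  moreover have "card (round_robin_colour p v ` ({0..p} - {v})) = card {0..<p}"
    using card_image[OF inj] \<open>v \<le> p\<close> by simp
  ultimately show ?thesis
    using inj by (simp add: bij_betw_def card_subset_eq)
qed

lemma card_round_robin_colour_less:
  assumes "odd p" "v \<le> p" "r \<le> p"
  shows "card {j. j \<le> p \<and> j \<noteq> v \<and> round_robin_colour p v j < r} = r"
proof -
  have "{j. j \<le> p \<and> j \<noteq> v \<and> round_robin_colour p v j < r}
      = ({0..p} - {v}) \<inter> round_robin_colour p v -` {0..<r}"
    by auto
  also have "card \<dots> = card {0..<r}"
  proof (rule bij_betw_same_card, rule bij_betw_subset)
    show "bij_betw (round_robin_colour p v) ({0..p} - {v}) {0..<p}"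
      using bij_betw_round_robin_colour[OF assms(1,2)] .
    then show "round_robin_colour p v ` (({0..p} - {v}) \<inter> round_robin_colour p v -` {0..<r})
        = {0..<r}"
      using assms(3) by (fastforce simp: bij_betw_def)
  qed auto
  finally show ?thesis by simp
qed

definition round_robin_rel :: "nat \<Rightarrow> nat \<Rightarrow> nat \<Rightarrow> nat \<Rightarrow> nat \<Rightarrow> bool" where
  "round_robin_rel s p r i j \<longleftrightarrow> s \<le> i \<and> i \<le> s + p \<and> s \<le> j \<and> j \<le> s + p \<and>
     round_robin_colour p (i - s) (j - s) < r"

lemma round_robin_rel_commute: "round_robin_rel s p r i j = round_robin_rel s p r j i"
  unfolding round_robin_rel_def by (metis round_robin_colour_commute)

lemma round_robin_rel_mono: "r \<le> r' \<Longrightarrow> round_robin_rel s p r i j \<Longrightarrow> round_robin_rel s p r' i j"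
  unfolding round_robin_rel_def by simp

lemma card_round_robin_rel:
  assumes "odd p" "s \<le> v" "v \<le> s + p" "r \<le> p"
  shows "card {j. j \<noteq> v \<and> round_robin_rel s p r v j} = r"
proof -
  have "{j. j \<noteq> v \<and> round_robin_rel s p r v j}
      = (\<lambda>j. j + s) ` {j. j \<le> p \<and> j \<noteq> v - s \<and> round_robin_colour p (v - s) j < r}"
  proof (intro equalityI subsetI)
    fix j assume "j \<in> {j. j \<noteq> v \<and> round_robin_rel s p r v j}"
    then show "j \<in> (\<lambda>j. j + s) ` {j. j \<le> p \<and> j \<noteq> v - s \<and> round_robin_colour p (v - s) j < r}"
      using assms(2) by (intro image_eqI[of _ _ "j - s"]) (auto simp: round_robin_rel_def)
  qed (use assms(2,3) in \<open>auto simp: round_robin_rel_def\<close>)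
  then show ?thesis
    using assms by (simp add: card_image card_round_robin_colour_less)
qed

definition realization_rel :: "nat \<Rightarrow> nat \<Rightarrow> nat \<Rightarrow> nat \<Rightarrow> nat \<Rightarrow> bool" where
  "realization_rel s p r i j \<longleftrightarrow> i < s \<or> j < s \<or> round_robin_rel s p r i j"

definition factor_rel :: "nat \<Rightarrow> nat \<Rightarrow> nat \<Rightarrow> nat \<Rightarrow> bool" where
  "factor_rel s p i j \<longleftrightarrow> (i < s \<and> s + p < j) \<or> (j < s \<and> s + p < i) \<or> round_robin_rel s p s i j"

lemma degree_realization_graph:
  assumes "odd p" "r \<le> p" "n = 2 * s + p + 1" "u < n"
  shows "degree (graph_of_rel n (realization_rel s p r)) u =
    (if u < s then n - 1 else if u \<le> s + p then s + r else s)"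
proof -
  have "realization_rel s p r i j = realization_rel s p r j i" for i j
    unfolding realization_rel_def using round_robin_rel_commute by blast
  then have degree: "degree (graph_of_rel n (realization_rel s p r)) u
      = card {v. v < n \<and> v \<noteq> u \<and> realization_rel s p r u v}"
    using degree_graph_of_rel assms(4) by blast
  consider "u < s" | "s \<le> u" "u \<le> s + p" | "s + p < u" by linarith
  then show ?thesis
  proof cases
    case 1
    then have "{v. v < n \<and> v \<noteq> u \<and> realization_rel s p r u v} = {0..<n} - {u}"
      by (auto simp: realization_rel_def)
    then show ?thesis using 1 degree assms(4) by simp
  next
    case 2
    then have "{v. v < n \<and> v \<noteq> u \<and> realization_rel s p r u v}
        = {0..<s} \<union> {v. v \<noteq> u \<and> round_robin_rel s p r u v}"
      using assms(3) by (auto simp: realization_rel_def round_robin_rel_def)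
    moreover have "{0..<s} \<inter> {v. v \<noteq> u \<and> round_robin_rel s p r u v} = {}"
      by (auto simp: round_robin_rel_def)
    moreover have "finite {v. v \<noteq> u \<and> round_robin_rel s p r u v}"
      by (rule finite_subset[of _ "{s..s + p}"]) (auto simp: round_robin_rel_def)
    ultimately show ?thesis
      using 2 degree card_round_robin_rel[OF assms(1) 2 assms(2)] by (simp add: card_Un_disjoint)
  next
    case 3
    then have "{v. v < n \<and> v \<noteq> u \<and> realization_rel s p r u v} = {0..<s}"
      using assms(3) by (auto simp: realization_rel_def round_robin_rel_def)
    then show ?thesis using 3 degree by simp
  qed
qed

lemma degree_factor_graph:
  assumes "odd p" "s \<le> p" "n = 2 * s + p + 1" "u < n"
  shows "degree (graph_of_rel n (factor_rel s p)) u = s"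
proof -
  have "factor_rel s p i j = factor_rel s p j i" for i j
    unfolding factor_rel_def using round_robin_rel_commute by blast
  then have degree: "degree (graph_of_rel n (factor_rel s p)) u
      = card {v. v < n \<and> v \<noteq> u \<and> factor_rel s p u v}"
    using degree_graph_of_rel assms(4) by blast
  consider "u < s" | "s \<le> u" "u \<le> s + p" | "s + p < u" by linarith
  then show ?thesis
  proof cases
    case 1
    then have "{v. v < n \<and> v \<noteq> u \<and> factor_rel s p u v} = {s + p + 1..<n}"
      by (auto simp: factor_rel_def round_robin_rel_def)
    then show ?thesis using degree assms(3) by simp
  next
    case 2
    then have "{v. v < n \<and> v \<noteq> u \<and> factor_rel s p u v}
        = {v. v \<noteq> u \<and> round_robin_rel s p s u v}"
      using assms(3) by (auto simp: factor_rel_def round_robin_rel_def)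
    then show ?thesis
      using degree card_round_robin_rel[OF assms(1) 2 assms(2)] by simp
  next
    case 3
    then have "{v. v < n \<and> v \<noteq> u \<and> factor_rel s p u v} = {0..<s}"
      using assms(3) by (auto simp: factor_rel_def round_robin_rel_def)
    then show ?thesis using degree by simp
  qed
qed

lemma nth_replicate_append3:
  "i < a + b + c \<Longrightarrow> (replicate a x @ replicate b y @ replicate c z) ! i =
    (if i < a then x else if i < a + b then y else z)"
  by (auto simp: nth_append)

lemma realization_with_factor:
  assumes "odd p" "2 * s \<le> x" "x \<le> s + p" "n = 2 * s + p + 1"
  defines "d \<equiv> replicate s (n - 1) @ replicate (p + 1) x @ replicate s s"
  shows "realization d (graph_of_rel n (realization_rel s p (x - s)))"
    and "k_factor n s (graph_of_rel n (realization_rel s p (x - s))) (graph_of_rel n (factor_rel s p))"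
proof -
  have "length d = n" using assms(4) by (simp add: d_def)
  moreover have "degree (graph_of_rel n (realization_rel s p (x - s))) u = d ! u" if "u < n" for u
  proof -
    have "d ! u = (if u < s then n - 1 else if u < s + (p + 1) then x else s)"
      unfolding d_def using that assms(4) by (subst nth_replicate_append3) auto
    then show ?thesis
      using that assms(1-4) by (simp add: degree_realization_graph)
  qed
  ultimately show "realization d (graph_of_rel n (realization_rel s p (x - s)))"
    unfolding realization_def by (simp add: simple_graph_graph_of_rel)
  have "factor_rel s p i j \<Longrightarrow> realization_rel s p (x - s) i j" for i j
    using round_robin_rel_mono[of s "x - s"] assms(2)
    unfolding factor_rel_def realization_rel_def by auto
  then show "k_factor n s (graph_of_rel n (realization_rel s p (x - s))) (graph_of_rel n (factor_rel s p))"
    unfolding k_factor_def using assms degree_factor_graph[of p s n]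
    by (simp add: graph_of_rel_mono)
qed

lemma realization_has_no_connected_factor:
  assumes "realization (replicate s (n - 1) @ replicate (p + 1) x @ replicate s s) G"
    and "n = 2 * s + p + 1" "0 < s"
  shows "\<not> connected_k_factor n s G H"
proof
  assume "connected_k_factor n s G H"
  then have "k_factor n s G H" and "connected_graph n H"
    unfolding connected_k_factor_def by auto
  let ?d = "replicate s (n - 1) @ replicate (p + 1) x @ replicate s s"
  have "length ?d = n" using assms(2) by simp
  then have "simple_graph n G" and degree_nth: "\<And>u. u < n \<Longrightarrow> degree G u = ?d ! u"
    using assms(1) unfolding realization_def by (simp_all only:)
  have degree: "degree G u = (if u < s then n - 1 else if u < s + (p + 1) then x else s)"
    if "u < n" for u
    unfolding degree_nth[OF that] using that assms(2) by (subst nth_replicate_append3) auto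
  have "\<not> connected_graph n H"
    using assms degree
    by (intro not_connected_k_factor[OF \<open>simple_graph n G\<close> \<open>k_factor n s G H\<close>,
          where A = "{0..<s}" and C = "{s + p + 1..<n}" and v = s]) auto
  then show False using \<open>connected_graph n H\<close> by contradiction
qed

theorem claim2:
  fixes n s k x :: nat
  assumes "even n" and "0 < s" and "2 * s < n" and "k = s"
    and "2 * s \<le> x" and "x \<le> n - s - 1"
  defines "d \<equiv> replicate s (n - 1) @ replicate (n - 2 * s) x @ replicate s s"
  shows "graphic d \<and> k_factorable d k \<and>
         (\<forall>G. realization d G \<longrightarrow> \<not> (\<exists>H. connected_k_factor n k G H))"
proof -
  define p where "p = n - 2 * s - 1"
  have n: "n = 2 * s + p + 1" and "odd p"
    using assms(1,3) by (auto simp: p_def elim!: evenE)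
  have d: "d = replicate s (n - 1) @ replicate (p + 1) x @ replicate s s"
    unfolding d_def using n by simp
  have "x \<le> s + p" using assms(6) n by linarith
  note factor = realization_with_factor[OF \<open>odd p\<close> assms(5) this n, folded d]
  have "length d = n" unfolding d using n by simp
  have "graphic d" using factor(1) unfolding graphic_def by blast
  moreover have "k_factorable d k"
    unfolding k_factorable_def assms(4) \<open>length d = n\<close> using factor \<open>graphic d\<close> by blast
  moreover have "\<not> connected_k_factor n k G H" if "realization d G" for G H
    using realization_has_no_connected_factor[OF _ n assms(2)] that assms(4) d by simp
  ultimately show ?thesis by blast
qed

end
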